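(* Let $N\ge 2$ be an integer. There exist a nonempty open convex set $C\subset\mathbb{R}^{N-2}$ and a continuous injective map $\Phi\colon C\to\mathbb{R}^{(N-1)\times(N-1)}$ such that for every $w\in C$ the matrix $H=\Phi(w)$ is lower triangular and the following holds: for every $d\ge1$, every nonexpansive $\mathbb{T}\colon\mathbb{R}^d\to\mathbb{R}^d$, every $y_0\in\mathbb{R}^d$ and every $y_\star\in\mathrm{Fix}\,\mathbb{T}$, the iterates defined by \[ y_{k+1} = y_k - \sum_{j=0}^{k} h_{k+1,j+1}\,(y_j - \mathbb{T}y_j), \qquad k=0,1,\dots,N-2, \] where $h_{k,j}$ denotes the $(k,j)$ entry of $H$, satisfy \[ \|y_{N-1}-\mathbb{T}y_{N-1}\|^2 \le \frac{4\|y_0-y_\star\|^2}{N^2}. \]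
   Context: $\mathbb{T}$ is nonexpansive if it is $1$-Lipschitz; $\mathrm{Fix}\,\mathbb{T}=\{y: y=\mathbb{T}y\}$. Rows and columns of $(N-1)\times(N-1)$ matrices are indexed $1,\dots,N-1$. *)

theory Defs
  imports "HOL-Analysis.Analysis"
begin

text \<open>Since the dimensions N-2, N-1 and d vary inside the statement, R^m is modelled
  explicitly as the set of real sequences supported on the indices 0..<m, with the
  Euclidean distance; (N-1)x(N-1) matrices are functions nat => nat => real supported
  on {1..N-1} x {1..N-1} (rows/columns indexed 1..N-1), with the Frobenius distance.\<close>

definition rvec :: "nat \<Rightarrow> (nat \<Rightarrow> real) set" where
  "rvec m = {x. \<forall>i\<ge>m. x i = 0}"

definition edist :: "nat \<Rightarrow> (nat \<Rightarrow> real) \<Rightarrow> (nat \<Rightarrow> real) \<Rightarrow> real" where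
  "edist m x y = sqrt (\<Sum>i<m. (x i - y i)^2)"

definition enorm :: "nat \<Rightarrow> (nat \<Rightarrow> real) \<Rightarrow> real" where
  "enorm m x = sqrt (\<Sum>i<m. (x i)^2)"

definition open_R :: "nat \<Rightarrow> (nat \<Rightarrow> real) set \<Rightarrow> bool" where
  "open_R m C \<longleftrightarrow> C \<subseteq> rvec m \<and>
     (\<forall>x\<in>C. \<exists>e>0. \<forall>y\<in>rvec m. edist m y x < e \<longrightarrow> y \<in> C)"

definition convex_R :: "(nat \<Rightarrow> real) set \<Rightarrow> bool" where
  "convex_R C \<longleftrightarrow> (\<forall>x\<in>C. \<forall>y\<in>C. \<forall>u::real. 0 \<le> u \<and> u \<le> 1 \<longrightarrow>
     (\<lambda>i. (1 - u) * x i + u * y i) \<in> C)"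

definition rmat :: "nat \<Rightarrow> (nat \<Rightarrow> nat \<Rightarrow> real) set" where
  "rmat n = {H. \<forall>i j. i \<notin> {1..n} \<or> j \<notin> {1..n} \<longrightarrow> H i j = 0}"

definition mdist :: "nat \<Rightarrow> (nat \<Rightarrow> nat \<Rightarrow> real) \<Rightarrow> (nat \<Rightarrow> nat \<Rightarrow> real) \<Rightarrow> real" where
  "mdist n A B = sqrt (\<Sum>i=1..n. \<Sum>j=1..n. (A i j - B i j)^2)"

definition continuous_R :: "nat \<Rightarrow> nat \<Rightarrow> (nat \<Rightarrow> real) set \<Rightarrow>
    ((nat \<Rightarrow> real) \<Rightarrow> (nat \<Rightarrow> nat \<Rightarrow> real)) \<Rightarrow> bool" where
  "continuous_R m n C \<Phi> \<longleftrightarrow> (\<forall>x\<in>C. \<forall>e>0. \<exists>\<delta>>0. \<forall>y\<in>C.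
     edist m y x < \<delta> \<longrightarrow> mdist n (\<Phi> y) (\<Phi> x) < e)"

definition lower_triangular :: "nat \<Rightarrow> (nat \<Rightarrow> nat \<Rightarrow> real) \<Rightarrow> bool" where
  "lower_triangular n H \<longleftrightarrow> (\<forall>i\<in>{1..n}. \<forall>j\<in>{1..n}. i < j \<longrightarrow> H i j = 0)"

definition nonexpansive_R :: "nat \<Rightarrow> ((nat \<Rightarrow> real) \<Rightarrow> (nat \<Rightarrow> real)) \<Rightarrow> bool" where
  "nonexpansive_R d T \<longleftrightarrow> (\<forall>x\<in>rvec d. T x \<in> rvec d) \<and>
     (\<forall>x\<in>rvec d. \<forall>y\<in>rvec d. edist d (T x) (T y) \<le> edist d x y)"

end

theory Submission
  imports Defs
begin

(* Write g_j = y_j - T y_j and pick weights t_0 = 0, t_1, ..., t_(N-2) in (0, 1/10), t_(N-1) = 0.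
  The step matrix is chosen so that the averaged points yh_k = (1 - t_k) y_k + t_k y_(k-1) and
  gh_k = (1 - t_k) g_k + t_k g_(k-1) follow the Halpern recursion
  yh_(k+1) = y_0 + (k+1)/(k+2) (yh_k - y_0 - gh_k).  Along it the energy
  V_k = k(k+1)/2 |gh_k|^2 + (k+1) <gh_k, yh_k - y_0> drops by (k+1)(k+2)/2 times the
  cocoercivity gap 2 <gh_(k+1) - gh_k, yh_(k+1) - yh_k> - |gh_(k+1) - gh_k|^2, which expands into
  gaps between the iterates themselves.  These are nonnegative because I - T is 1/2-cocoercive,
  and the single negative contribution is absorbed by the previous step since the weights are
  small.  Hence V_(N-1) <= V_0 = 0; as t_(N-1) = 0, combining this with the gap against y_star
  gives N^2 |g_(N-1)|^2 <= 4 |y_0 - y_star|^2.  The weights are read off the diagonal of the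
  step matrix one after another, which makes the parametrisation injective. *)

(* y_0 - y_k = (SUM j. iter_coeff t k j * g_j): the recursion is the Halpern recursion of the
  averaged points, solved for y_(k+1) (see iter_coeff_Suc_averaged). *)
fun iter_coeff :: "(nat \<Rightarrow> real) \<Rightarrow> nat \<Rightarrow> nat \<Rightarrow> real" where
  "iter_coeff t 0 j = 0"
| "iter_coeff t (Suc k) j =
     (real (k + 1) / real (k + 2) * ((1 - t k) * iter_coeff t k j + t k * iter_coeff t (k - 1) j
        + (if j = k then 1 - t k else 0) + (if j = k - 1 then t k else 0))
      - t (Suc k) * iter_coeff t k j) / (1 - t (Suc k))"

declare iter_coeff.simps(2) [simp del]

lemma iter_coeff_eq_0: "k \<le> j \<Longrightarrow> iter_coeff t k j = 0"
  by (induction t k j rule: iter_coeff.induct) (auto simp: iter_coeff.simps(2))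

lemma iter_coeff_diag:
  assumes "t 0 = 0"
  shows "iter_coeff t (Suc k) k = real (k + 1) / real (k + 2) * (1 - t k) / (1 - t (Suc k))"
  using assms by (cases k) (auto simp: iter_coeff.simps(2) iter_coeff_eq_0)

lemma iter_coeff_Suc_averaged:
  assumes "t (Suc k) \<noteq> 1"
  shows "(1 - t (Suc k)) * iter_coeff t (Suc k) j + t (Suc k) * iter_coeff t k j =
     real (k + 1) / real (k + 2) * ((1 - t k) * iter_coeff t k j + t k * iter_coeff t (k - 1) j
        + (if j = k then 1 - t k else 0) + (if j = k - 1 then t k else 0))"
  using assms by (simp add: iter_coeff.simps(2))

definition coco_gap ::
    "nat \<Rightarrow> (nat \<Rightarrow> real) \<Rightarrow> (nat \<Rightarrow> real) \<Rightarrow> (nat \<Rightarrow> real) \<Rightarrow> (nat \<Rightarrow> real) \<Rightarrow> real" where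
  "coco_gap d x y gx gy = (\<Sum>i<d. 2 * (gx i - gy i) * (x i - y i) - (gx i - gy i)^2)"

(* Since 0 - 1 = 0 on nat, averaged t x 0 = x 0 whatever t 0 is. *)
definition averaged :: "(nat \<Rightarrow> real) \<Rightarrow> (nat \<Rightarrow> nat \<Rightarrow> real) \<Rightarrow> nat \<Rightarrow> nat \<Rightarrow> real" where
  "averaged t x k i = (1 - t k) * x k i + t k * x (k - 1) i"

definition halpern_energy ::
    "nat \<Rightarrow> nat \<Rightarrow> (nat \<Rightarrow> real) \<Rightarrow> (nat \<Rightarrow> real) \<Rightarrow> (nat \<Rightarrow> real) \<Rightarrow> real" where
  "halpern_energy d k x0 x g =
     (\<Sum>i<d. real k * real (k + 1) / 2 * (g i)^2 + real (k + 1) * (g i * (x i - x0 i)))"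

lemma coco_gap_nonneg_if_nonexpansive_R:
  assumes "nonexpansive_R d T" "u \<in> rvec d" "v \<in> rvec d"
  shows "0 \<le> coco_gap d u v (\<lambda>i. u i - T u i) (\<lambda>i. v i - T v i)"
proof -
  have "edist d (T u) (T v) \<le> edist d u v" using assms unfolding nonexpansive_R_def by blast
  then have "(\<Sum>i<d. (T u i - T v i)^2) \<le> (\<Sum>i<d. (u i - v i)^2)"
    unfolding edist_def by (simp add: sum_nonneg)
  moreover have "(\<Sum>i<d. (u i - v i)^2) - (\<Sum>i<d. (T u i - T v i)^2) =
      coco_gap d u v (\<lambda>i. u i - T u i) (\<lambda>i. v i - T v i)"
    unfolding coco_gap_def sum_subtractf[symmetric]
    by (rule sum.cong) (simp_all add: power2_eq_square algebra_simps)
  ultimately show ?thesis by linarith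
qed

lemma halpern_energy_step:
  assumes "\<And>i. x' i = x0 i + real (k + 1) / real (k + 2) * (x i - x0 i - g i)"
  shows "halpern_energy d k x0 x g - halpern_energy d (Suc k) x0 x' g' =
    real (k + 1) * real (k + 2) / 2 * coco_gap d x' x g' g"
  unfolding halpern_energy_def coco_gap_def sum_subtractf[symmetric] sum_distrib_left
  by (rule sum.cong) (simp_all add: assms field_simps power2_eq_square)

lemma coco_gap_averaged:
  "coco_gap d (averaged t x (Suc k)) (averaged t x k) (averaged t g (Suc k)) (averaged t g k) =
     (1 - t k - t (Suc k)) * (1 - t (Suc k)) * coco_gap d (x (Suc k)) (x k) (g (Suc k)) (g k)
   + t k * (1 - t (Suc k)) * coco_gap d (x (Suc k)) (x (k - 1)) (g (Suc k)) (g (k - 1))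
   - t k * (1 - t k - t (Suc k)) * coco_gap d (x k) (x (k - 1)) (g k) (g (k - 1))"
  unfolding coco_gap_def averaged_def sum_distrib_left sum.distrib[symmetric] sum_subtractf[symmetric]
  by (rule sum.cong) (simp_all add: power2_eq_square algebra_simps)

lemma halpern_energy_bound:
  fixes n d :: nat and x0 x xs g :: "nat \<Rightarrow> real"
  assumes energy: "halpern_energy d n x0 x g \<le> 0"
    and gap: "0 \<le> coco_gap d x xs g (\<lambda>_. 0)"
  shows "(\<Sum>i<d. (g i)^2) \<le> 4 * (\<Sum>i<d. (x0 i - xs i)^2) / (real (n + 1))^2"
proof -
  define m where "m = real (n + 1)"
  define G where "G = (\<Sum>i<d. (g i)^2)"
  define P where "P = (\<Sum>i<d. g i * (x i - x0 i))"
  define Z where "Z = (\<Sum>i<d. g i * (x0 i - xs i))"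
  define X where "X = (\<Sum>i<d. (x0 i - xs i)^2)"
  have "m > 0" unfolding m_def by simp
  have "halpern_energy d n x0 x g = (m - 1) * m / 2 * G + m * P"
    unfolding halpern_energy_def G_def P_def m_def sum.distrib sum_distrib_left by simp
  with energy have scaled_energy: "m * m * G - m * G + 2 * (m * P) \<le> 0"
    by (simp add: field_simps)
  have "coco_gap d x xs g (\<lambda>_. 0) = 2 * P + 2 * Z - G"
    unfolding coco_gap_def P_def Z_def G_def sum_distrib_left sum.distrib[symmetric] sum_subtractf[symmetric]
    by (rule sum.cong) (simp_all add: algebra_simps)
  with gap \<open>m > 0\<close> have scaled_gap: "0 \<le> 2 * (m * P) + 2 * (m * Z) - m * G"
    using mult_nonneg_nonneg[of m "2 * P + 2 * Z - G"] by (simp add: algebra_simps)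
  have "0 \<le> (\<Sum>i<d. (m / 2 * g i - (x0 i - xs i))^2)" by (simp add: sum_nonneg)
  also have "\<dots> = m * m * G / 4 - m * Z + X"
    unfolding G_def Z_def X_def sum_distrib_left sum_divide_distrib sum.distrib[symmetric] sum_subtractf[symmetric]
    by (rule sum.cong) (simp_all add: power2_eq_square algebra_simps)
  finally have "m * m * G \<le> 4 * X" using scaled_energy scaled_gap by linarith
  with \<open>m > 0\<close> have "G \<le> 4 * X / m^2" by (simp add: pos_le_divide_eq power2_eq_square mult.commute)
  then show ?thesis unfolding G_def X_def m_def .
qed

lemma regrouping_weight_le:
  fixes a b c :: real and k :: nat
  assumes "0 \<le> a" "a \<le> 1/10" "0 \<le> b" "b \<le> 1/10" "0 \<le> c" "c \<le> 1/10"
  shows "real (k + 2) * real (k + 3) / 2 * (b * (1 - b - c))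
     \<le> real (k + 1) * real (k + 2) / 2 * ((1 - a - b) * (1 - b))"
proof -
  have "b * (1 - b - c) \<le> 1/10 * 1"
    using assms by (intro mult_mono) auto
  then have "real (k + 2) * real (k + 3) / 2 * (b * (1 - b - c)) \<le> real (k + 2) * real (k + 3) / 20"
    using mult_left_mono[of "b * (1 - b - c)" "1/10" "real (k + 2) * real (k + 3) / 2"] by simp
  also have "\<dots> \<le> real (k + 1) * real (k + 2) / 2 * (8/10 * (9/10))"
    by (simp add: field_simps)
  also have "\<dots> \<le> real (k + 1) * real (k + 2) / 2 * ((1 - a - b) * (1 - b))"
    using assms by (intro mult_left_mono mult_mono) auto
  finally show ?thesis .
qed

lemma weighted_gap_sum_nonneg:
  fixes t :: "nat \<Rightarrow> real" and Q :: "nat \<Rightarrow> nat \<Rightarrow> real"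
  assumes t0: "t 0 = 0" and t: "\<And>k. 0 \<le> t k \<and> t k \<le> 1/10"
    and Q: "\<And>a b. a \<le> n \<Longrightarrow> b \<le> n \<Longrightarrow> 0 \<le> Q a b"
  shows "0 \<le> (\<Sum>k<n. real (k + 1) * real (k + 2) / 2 *
     ((1 - t k - t (Suc k)) * (1 - t (Suc k)) * Q k (Suc k)
      + t k * (1 - t (Suc k)) * Q (k - 1) (Suc k)
      - t k * (1 - t k - t (Suc k)) * Q (k - 1) k))"
proof (cases n)
  case 0 then show ?thesis by simp
next
  case (Suc m)
  define \<omega> where "\<omega> k = real (k + 1) * real (k + 2) / 2" for k
  define \<alpha> where "\<alpha> k = \<omega> k * ((1 - t k - t (Suc k)) * (1 - t (Suc k)))" for k
  define \<gamma> where "\<gamma> k = \<omega> k * (t k * (1 - t k - t (Suc k)))" for k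
  have \<alpha>_nonneg: "0 \<le> \<alpha> k" for k
    unfolding \<alpha>_def \<omega>_def using t[of k] t[of "Suc k"] by (intro mult_nonneg_nonneg) auto
  have "(\<Sum>k<n. \<gamma> k * Q (k - 1) k) = (\<Sum>k<m. \<gamma> (Suc k) * Q k (Suc k))"
    unfolding Suc sum.lessThan_Suc_shift by (simp add: \<gamma>_def t0)
  also have "\<dots> \<le> (\<Sum>k<m. \<alpha> k * Q k (Suc k))"
  proof (rule sum_mono)
    fix k assume "k \<in> {..<m}"
    have "\<gamma> (Suc k) \<le> \<alpha> k"
      unfolding \<alpha>_def \<gamma>_def \<omega>_def
      using regrouping_weight_le[of "t k" "t (Suc k)" "t (Suc (Suc k))" k] t by (simp add: add.commute)
    moreover have "0 \<le> Q k (Suc k)" using \<open>k \<in> {..<m}\<close> Suc by (intro Q) auto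
    ultimately show "\<gamma> (Suc k) * Q k (Suc k) \<le> \<alpha> k * Q k (Suc k)" by (rule mult_right_mono)
  qed
  also have "\<dots> \<le> (\<Sum>k<n. \<alpha> k * Q k (Suc k))"
    unfolding Suc using \<alpha>_nonneg Q[of m "Suc m"] Suc by (simp add: mult_nonneg_nonneg)
  finally have "0 \<le> (\<Sum>k<n. \<alpha> k * Q k (Suc k) - \<gamma> k * Q (k - 1) k)"
    by (simp add: sum_subtractf)
  also have "\<dots> \<le> (\<Sum>k<n. \<alpha> k * Q k (Suc k) + \<omega> k * (t k * (1 - t (Suc k))) * Q (k - 1) (Suc k)
      - \<gamma> k * Q (k - 1) k)"
  proof (rule sum_mono)
    fix k assume "k \<in> {..<n}"
    then have "0 \<le> Q (k - 1) (Suc k)" by (intro Q) auto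
    moreover have "0 \<le> \<omega> k * (t k * (1 - t (Suc k)))"
      unfolding \<omega>_def using t[of k] t[of "Suc k"] by (intro mult_nonneg_nonneg) auto
    ultimately show "\<alpha> k * Q k (Suc k) - \<gamma> k * Q (k - 1) k \<le> \<alpha> k * Q k (Suc k)
      + \<omega> k * (t k * (1 - t (Suc k))) * Q (k - 1) (Suc k) - \<gamma> k * Q (k - 1) k"
      by simp
  qed
  also have "\<dots> = (\<Sum>k<n. real (k + 1) * real (k + 2) / 2 *
     ((1 - t k - t (Suc k)) * (1 - t (Suc k)) * Q k (Suc k)
      + t k * (1 - t (Suc k)) * Q (k - 1) (Suc k)
      - t k * (1 - t k - t (Suc k)) * Q (k - 1) k))"
    unfolding \<alpha>_def \<gamma>_def \<omega>_def by (intro sum.cong) (simp_all add: field_simps)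
  finally show ?thesis .
qed

lemma iterates_in_rvec:
  assumes T: "nonexpansive_R d T" and y0: "y 0 \<in> rvec d"
    and rec: "\<And>k i. k < n \<Longrightarrow> y (Suc k) i = y k i - (\<Sum>j\<le>k. h k j * (y j i - T (y j) i))"
  shows "m \<le> n \<Longrightarrow> y m \<in> rvec d"
proof (induction m rule: less_induct)
  case (less m)
  show ?case
  proof (cases m)
    case 0 then show ?thesis using y0 by simp
  next
    case (Suc k)
    have "y j \<in> rvec d \<and> T (y j) \<in> rvec d" if "j \<le> k" for j
      using less that Suc T unfolding nonexpansive_R_def by auto
    then show ?thesis
      using rec[of k] less.prems Suc unfolding rvec_def by auto
  qed
qed

lemma iterates_eq_telescoped:
  fixes c :: "nat \<Rightarrow> nat \<Rightarrow> real" and x g :: "nat \<Rightarrow> real"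
  assumes c: "\<And>k j. k \<le> j \<Longrightarrow> c k j = 0"
    and rec: "\<And>k. k < n \<Longrightarrow> x (Suc k) = x k - (\<Sum>j\<le>k. (c (Suc k) j - c k j) * g j)"
  shows "m \<le> n \<Longrightarrow> x m = x 0 - (\<Sum>j<n. c m j * g j)"
proof (induction m)
  case 0 then show ?case by (simp add: c)
next
  case (Suc k)
  have "(\<Sum>j\<le>k. (c (Suc k) j - c k j) * g j) = (\<Sum>j<n. (c (Suc k) j - c k j) * g j)"
    using Suc.prems by (intro sum.mono_neutral_left) (auto simp: c)
  then show ?case
    using rec[of k] Suc by (simp add: sum_subtractf left_diff_distrib)
qed

lemma averaged_iterates_halpern:
  assumes t: "t (Suc k) \<noteq> 1" and k: "k < n"
    and rep: "\<And>m. m \<le> n \<Longrightarrow> y m i = y 0 i - (\<Sum>j<n. iter_coeff t m j * g j i)"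
  shows "averaged t y (Suc k) i =
    y 0 i + real (k + 1) / real (k + 2) * (averaged t y k i - y 0 i - averaged t g k i)"
proof -
  define r where "r = real (k + 1) / real (k + 2)"
  define S where "S m = (\<Sum>j<n. iter_coeff t m j * g j i)" for m
  have "(1 - t (Suc k)) * S (Suc k) + t (Suc k) * S k =
      (\<Sum>j<n. ((1 - t (Suc k)) * iter_coeff t (Suc k) j + t (Suc k) * iter_coeff t k j) * g j i)"
    unfolding S_def sum_distrib_left sum.distrib[symmetric]
    by (rule sum.cong) (simp_all add: algebra_simps)
  also have "\<dots> = (\<Sum>j<n. r * ((1 - t k) * iter_coeff t k j + t k * iter_coeff t (k - 1) j
        + (if j = k then 1 - t k else 0) + (if j = k - 1 then t k else 0)) * g j i)"
    unfolding iter_coeff_Suc_averaged[of t k, OF t] r_def ..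
  also have "\<dots> = r * ((1 - t k) * S k + t k * S (k - 1)
      + (\<Sum>j<n. (if j = k then 1 - t k else 0) * g j i)
      + (\<Sum>j<n. (if j = k - 1 then t k else 0) * g j i))"
    unfolding S_def distrib_left sum_distrib_left sum.distrib[symmetric]
    by (rule sum.cong) (simp_all add: algebra_simps)
  also have "\<dots> = r * ((1 - t k) * S k + t k * S (k - 1) + (1 - t k) * g k i + t k * g (k - 1) i)"
    using k by (simp add: if_distrib[of "\<lambda>a. a * _"] cong: if_cong)
  finally have avg_S: "(1 - t (Suc k)) * S (Suc k) + t (Suc k) * S k =
      r * ((1 - t k) * S k + t k * S (k - 1) + (1 - t k) * g k i + t k * g (k - 1) i)" .
  have S: "S (Suc k) = y 0 i - y (Suc k) i" "S k = y 0 i - y k i" "S (k - 1) = y 0 i - y (k - 1) i"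
    using rep[of "Suc k"] rep[of k] rep[of "k - 1"] k unfolding S_def by auto
  have "averaged t y (Suc k) i = y 0 i - ((1 - t (Suc k)) * S (Suc k) + t (Suc k) * S k)"
    unfolding averaged_def S by (simp add: algebra_simps)
  also have "\<dots> = y 0 i - r * ((1 - t k) * S k + t k * S (k - 1) + (1 - t k) * g k i + t k * g (k - 1) i)"
    unfolding avg_S ..
  also have "\<dots> = y 0 i + r * (averaged t y k i - y 0 i - averaged t g k i)"
    unfolding averaged_def S by (simp add: algebra_simps)
  finally show ?thesis unfolding r_def .
qed

lemma averaged_halpern_energy_nonpos:
  fixes t :: "nat \<Rightarrow> real" and y g :: "nat \<Rightarrow> nat \<Rightarrow> real"
  assumes t0: "t 0 = 0" and t: "\<And>k. 0 \<le> t k \<and> t k \<le> 1/10"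
    and gaps: "\<And>a b. a \<le> n \<Longrightarrow> b \<le> n \<Longrightarrow> 0 \<le> coco_gap d (y a) (y b) (g a) (g b)"
    and rep: "\<And>m i. m \<le> n \<Longrightarrow> y m i = y 0 i - (\<Sum>j<n. iter_coeff t m j * g j i)"
  shows "halpern_energy d n (y 0) (averaged t y n) (averaged t g n) \<le> 0"
proof -
  define E where "E k = halpern_energy d k (y 0) (averaged t y k) (averaged t g k)" for k
  define Q where "Q a b = coco_gap d (y b) (y a) (g b) (g a)" for a b
  have step: "E k - E (Suc k) = real (k + 1) * real (k + 2) / 2 * (
      (1 - t k - t (Suc k)) * (1 - t (Suc k)) * Q k (Suc k)
      + t k * (1 - t (Suc k)) * Q (k - 1) (Suc k)
      - t k * (1 - t k - t (Suc k)) * Q (k - 1) k)" if "k < n" for k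
  proof -
    have "t (Suc k) \<noteq> 1" using t[of "Suc k"] by auto
    then have "E k - E (Suc k) = real (k + 1) * real (k + 2) / 2 * coco_gap d
        (averaged t y (Suc k)) (averaged t y k) (averaged t g (Suc k)) (averaged t g k)"
      unfolding E_def by (intro halpern_energy_step averaged_iterates_halpern[OF _ that rep])
    then show ?thesis
      unfolding coco_gap_averaged Q_def .
  qed
  have "E 0 - E n = (\<Sum>k<n. real (k + 1) * real (k + 2) / 2 * (
      (1 - t k - t (Suc k)) * (1 - t (Suc k)) * Q k (Suc k)
      + t k * (1 - t (Suc k)) * Q (k - 1) (Suc k)
      - t k * (1 - t k - t (Suc k)) * Q (k - 1) k))"
    unfolding sum_lessThan_telescope'[symmetric] by (rule sum.cong) (simp_all add: step)
  also have "0 \<le> \<dots>"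
    using t0 t gaps unfolding Q_def by (intro weighted_gap_sum_nonneg)
  finally have "E n \<le> E 0" by simp
  moreover have "E 0 = 0"
    unfolding E_def halpern_energy_def averaged_def by (simp add: algebra_simps)
  ultimately show ?thesis unfolding E_def by simp
qed

lemma iter_coeff_scheme_bound:
  fixes t :: "nat \<Rightarrow> real" and T :: "(nat \<Rightarrow> real) \<Rightarrow> nat \<Rightarrow> real" and y :: "nat \<Rightarrow> nat \<Rightarrow> real"
  assumes t0: "t 0 = 0" and tn: "t n = 0" and t: "\<And>k. 0 \<le> t k \<and> t k \<le> 1/10"
    and T: "nonexpansive_R d T" and y0: "y 0 \<in> rvec d" and ys: "ys \<in> rvec d" "T ys = ys"
    and rec: "\<And>k i. k < n \<Longrightarrow> y (Suc k) i =
      y k i - (\<Sum>j\<le>k. (iter_coeff t (Suc k) j - iter_coeff t k j) * (y j i - T (y j) i))"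
  shows "(\<Sum>i<d. (y n i - T (y n) i)^2) \<le> 4 * (\<Sum>i<d. (y 0 i - ys i)^2) / (real (n + 1))^2"
proof -
  define g where "g j i = y j i - T (y j) i" for j i
  have y: "y m \<in> rvec d" if "m \<le> n" for m
    using iterates_in_rvec[OF T y0 rec that] .
  have "halpern_energy d n (y 0) (averaged t y n) (averaged t g n) \<le> 0"
  proof (rule averaged_halpern_energy_nonpos[where t=t, OF t0 t])
    show "0 \<le> coco_gap d (y a) (y b) (g a) (g b)" if "a \<le> n" "b \<le> n" for a b
      unfolding g_def using that by (intro coco_gap_nonneg_if_nonexpansive_R T y)
    show "y m i = y 0 i - (\<Sum>j<n. iter_coeff t m j * g j i)" if "m \<le> n" for m i
      using iterates_eq_telescoped[of "iter_coeff t" n "\<lambda>k. y k i" "\<lambda>j. g j i"]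
        iter_coeff_eq_0 rec that unfolding g_def by blast
  qed
  moreover have "averaged t y n = y n" "averaged t g n = g n"
    unfolding averaged_def tn by auto
  moreover have "0 \<le> coco_gap d (y n) ys (g n) (\<lambda>_. 0)"
    using coco_gap_nonneg_if_nonexpansive_R[OF T y[of n] ys(1)] ys(2) unfolding g_def by simp
  ultimately show ?thesis
    using halpern_energy_bound unfolding g_def by fastforce
qed

definition edist_filter ::
    "nat \<Rightarrow> (nat \<Rightarrow> real) set \<Rightarrow> (nat \<Rightarrow> real) \<Rightarrow> (nat \<Rightarrow> real) filter" where
  "edist_filter m C x = (INF \<delta>\<in>{0<..}. principal {y \<in> C. edist m y x < \<delta>})"

lemma eventually_edist_filter:
  "eventually P (edist_filter m C x) \<longleftrightarrow> (\<exists>\<delta>>0. \<forall>y\<in>C. edist m y x < \<delta> \<longrightarrow> P y)"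
proof -
  have "eventually P (edist_filter m C x) \<longleftrightarrow>
      (\<exists>\<delta>\<in>{0<..}. eventually P (principal {y \<in> C. edist m y x < (\<delta>::real)}))"
    unfolding edist_filter_def
  proof (rule eventually_INF_base)
    fix a b :: real assume "a \<in> {0<..}" "b \<in> {0<..}"
    then show "\<exists>c\<in>{0<..}. principal {y \<in> C. edist m y x < c}
        \<le> inf (principal {y \<in> C. edist m y x < a}) (principal {y \<in> C. edist m y x < b})"
      by (intro bexI[of _ "min a b"]) auto
  qed auto
  then show ?thesis by (auto simp: eventually_principal)
qed

lemma abs_coord_le_edist: "i < m \<Longrightarrow> \<bar>y i - x i\<bar> \<le> edist m y x"
  unfolding edist_def
  by (metis (no_types, lifting) finite_lessThan lessThan_iff member_le_sum real_sqrt_abs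
      real_sqrt_le_mono zero_le_power2)

lemma tendsto_coord_edist_filter: "i < m \<Longrightarrow> ((\<lambda>y. y i) \<longlongrightarrow> x i) (edist_filter m C x)"
  unfolding tendsto_iff eventually_edist_filter dist_real_def
  by (meson abs_coord_le_edist le_less_trans)

lemma continuous_R_if_tendsto:
  assumes "\<And>x i j. x \<in> C \<Longrightarrow> ((\<lambda>y. \<Phi> y i j) \<longlongrightarrow> \<Phi> x i j) (edist_filter m C x)"
  shows "continuous_R m n C \<Phi>"
  unfolding continuous_R_def
proof (intro ballI allI impI)
  fix x :: "nat \<Rightarrow> real" and e :: real
  assume "x \<in> C" "0 < e"
  have "((\<lambda>y. mdist n (\<Phi> y) (\<Phi> x)) \<longlongrightarrow>
      sqrt (\<Sum>i=1..n. \<Sum>j=1..n. (\<Phi> x i j - \<Phi> x i j)^2)) (edist_filter m C x)"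
    unfolding mdist_def by (intro tendsto_intros assms[OF \<open>x \<in> C\<close>])
  then have "eventually (\<lambda>y. mdist n (\<Phi> y) (\<Phi> x) < e) (edist_filter m C x)"
    using \<open>0 < e\<close> by (simp add: order_tendstoD(2))
  then show "\<exists>\<delta>>0. \<forall>y\<in>C. edist m y x < \<delta> \<longrightarrow> mdist n (\<Phi> y) (\<Phi> x) < e"
    unfolding eventually_edist_filter .
qed

definition weights :: "nat \<Rightarrow> (nat \<Rightarrow> real) \<Rightarrow> nat \<Rightarrow> real" where
  "weights N w k = (if 1 \<le> k \<and> k \<le> N - 2 then w (k - 1) else 0)"

(* w i is the weight t_(i+1); the bound 1/10 is what regrouping_weight_le needs. *)
definition param_set :: "nat \<Rightarrow> (nat \<Rightarrow> real) set" where
  "param_set N = {w \<in> rvec (N - 2). \<forall>i<N - 2. 0 < w i \<and> w i < 1/10}"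

definition step_matrix :: "nat \<Rightarrow> (nat \<Rightarrow> real) \<Rightarrow> nat \<Rightarrow> nat \<Rightarrow> real" where
  "step_matrix N w i j = (if 1 \<le> i \<and> i \<le> N - 1 \<and> 1 \<le> j \<and> j \<le> i
     then iter_coeff (weights N w) i (j - 1) - iter_coeff (weights N w) (i - 1) (j - 1) else 0)"

lemma weights_0 [simp]: "weights N w 0 = 0"
  and weights_last [simp]: "weights N w (N - 1) = 0"
  unfolding weights_def by auto

lemma weights_bounds:
  assumes "w \<in> param_set N"
  shows "0 \<le> weights N w k" "weights N w k < 1/10"
proof -
  have "0 < w (k - 1) \<and> w (k - 1) < 1/10" if "1 \<le> k" "k \<le> N - 2"
    using assms that unfolding param_set_def by auto
  then show "0 \<le> weights N w k" "weights N w k < 1/10"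
    unfolding weights_def by auto
qed

lemma param_set_nonempty: "param_set N \<noteq> {}"
proof -
  have "(\<lambda>i. if i < N - 2 then 1/20 else 0) \<in> param_set N"
    unfolding param_set_def rvec_def by auto
  then show ?thesis by blast
qed

lemma open_R_param_set: "open_R (N - 2) (param_set N)"
  unfolding open_R_def
proof (intro conjI ballI)
  show "param_set N \<subseteq> rvec (N - 2)" unfolding param_set_def by auto
  fix x assume x: "x \<in> param_set N"
  define S where "S = insert 1 ((\<lambda>i. x i) ` {..<N - 2} \<union> (\<lambda>i. 1/10 - x i) ` {..<N - 2})"
  define e where "e = Min S"
  have "finite S" "\<forall>s\<in>S. 0 < s" using x unfolding S_def param_set_def by auto
  then have "0 < e" unfolding e_def S_def by (simp add: Min_gr_iff)
  have e: "e \<le> x i" "e \<le> 1/10 - x i" if "i < N - 2" for i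
    unfolding e_def using \<open>finite S\<close> that unfolding S_def by (auto intro: Min_le)
  show "\<exists>e>0. \<forall>y\<in>rvec (N - 2). edist (N - 2) y x < e \<longrightarrow> y \<in> param_set N"
  proof (intro exI[of _ e] conjI ballI impI \<open>0 < e\<close>)
    fix y assume "y \<in> rvec (N - 2)" "edist (N - 2) y x < e"
    moreover have "0 < y i \<and> y i < 1/10" if "i < N - 2" for i
      using abs_coord_le_edist[OF that, of y x] e[OF that] \<open>edist (N - 2) y x < e\<close> by auto
    ultimately show "y \<in> param_set N" unfolding param_set_def by auto
  qed
qed

lemma convex_R_param_set: "convex_R (param_set N)"
  unfolding convex_R_def
proof (intro ballI allI impI)
  fix x y :: "nat \<Rightarrow> real" and u :: real
  assume x: "x \<in> param_set N" and y: "y \<in> param_set N" and u: "0 \<le> u \<and> u \<le> 1"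
  have "0 < (1 - u) * x i + u * y i \<and> (1 - u) * x i + u * y i < 1/10" if "i < N - 2" for i
  proof -
    have "x i \<in> {0<..<1/10}" "y i \<in> {0<..<1/10}"
      using x y that unfolding param_set_def by auto
    then have "(1 - u) *\<^sub>R x i + u *\<^sub>R y i \<in> {0<..<1/10::real}"
      using u by (intro convexD convex_real_interval) auto
    then show ?thesis by simp
  qed
  moreover have "(1 - u) * x i + u * y i = 0" if "N - 2 \<le> i" for i
    using x y that unfolding param_set_def rvec_def by auto
  ultimately show "(\<lambda>i. (1 - u) * x i + u * y i) \<in> param_set N"
    unfolding param_set_def rvec_def by auto
qed

lemma step_matrix_diag:
  assumes "Suc k \<le> N - 1"
  shows "step_matrix N w (Suc k) (Suc k) =
    real (k + 1) / real (k + 2) * (1 - weights N w k) / (1 - weights N w (Suc k))"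
  using assms by (simp add: step_matrix_def iter_coeff_eq_0 iter_coeff_diag)

lemma inj_on_step_matrix: "inj_on (step_matrix N) (param_set N)"
proof (rule inj_onI)
  fix w w' assume w: "w \<in> param_set N" and w': "w' \<in> param_set N"
    and eq: "step_matrix N w = step_matrix N w'"
  have weights_eq: "weights N w k = weights N w' k" if "k \<le> N - 1" for k
    using that
  proof (induction k)
    case 0 then show ?case by simp
  next
    case (Suc k)
    define r where "r = real (k + 1) / real (k + 2) * (1 - weights N w k)"
    have "r / (1 - weights N w (Suc k)) = step_matrix N w (Suc k) (Suc k)"
      unfolding r_def step_matrix_diag[OF Suc.prems] ..
    also have "\<dots> = r / (1 - weights N w' (Suc k))"
      unfolding eq r_def step_matrix_diag[OF Suc.prems] using Suc by simp
    finally have "r / (1 - weights N w (Suc k)) = r / (1 - weights N w' (Suc k))" .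
    moreover have "r \<noteq> 0" using weights_bounds[OF w, of k] unfolding r_def by simp
    ultimately show ?case by (simp add: divide_cancel_left)
  qed
  show "w = w'"
  proof (intro ext)
    fix i
    show "w i = w' i"
    proof (cases "i < N - 2")
      case True
      with weights_eq[of "Suc i"] show ?thesis unfolding weights_def by simp
    next
      case False
      with w w' show ?thesis unfolding param_set_def rvec_def by auto
    qed
  qed
qed

lemma continuous_R_step_matrix: "continuous_R (N - 2) (N - 1) (param_set N) (step_matrix N)"
proof (rule continuous_R_if_tendsto)
  fix x i j assume x: "x \<in> param_set N"
  let ?F = "edist_filter (N - 2) (param_set N) x"
  have weights: "((\<lambda>w. weights N w k) \<longlongrightarrow> weights N x k) ?F" for k
    unfolding weights_def by (auto intro: tendsto_coord_edist_filter)
  have "((\<lambda>w. iter_coeff (weights N w) k l) \<longlongrightarrow> iter_coeff (weights N x) k l) ?F" for k l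
  proof (induction k arbitrary: l rule: less_induct)
    case (less k)
    show ?case
    proof (cases k)
      case 0 then show ?thesis by simp
    next
      case (Suc k')
      have IH: "((\<lambda>w. iter_coeff (weights N w) m l) \<longlongrightarrow> iter_coeff (weights N x) m l) ?F"
        if "m \<le> k'" for m l
        using less.IH Suc that by simp
      have "1 - weights N x (Suc k') \<noteq> 0" using weights_bounds[OF x, of "Suc k'"] by simp
      then show ?thesis
        unfolding Suc iter_coeff.simps(2)
        by (cases "l = k'"; cases "l = k' - 1") (auto intro!: tendsto_intros IH weights)
    qed
  qed
  then show "((\<lambda>w. step_matrix N w i j) \<longlongrightarrow> step_matrix N x i j) ?F"
    unfolding step_matrix_def by (auto intro: tendsto_diff)
qed

lemma step_matrix_scheme_bound:
  assumes N: "N \<ge> 2" and w: "w \<in> param_set N"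
    and T: "nonexpansive_R d T" and y0: "y 0 \<in> rvec d" and ystar: "ystar \<in> rvec d" "T ystar = ystar"
    and rec: "\<forall>k\<le>N - 2. \<forall>i. y (Suc k) i =
      y k i - (\<Sum>j\<le>k. step_matrix N w (k + 1) (j + 1) * (y j i - T (y j) i))"
  shows "(enorm d (\<lambda>i. y (N - 1) i - T (y (N - 1)) i))^2 \<le> 4 * (edist d (y 0) ystar)^2 / (real N)^2"
proof -
  have "(\<Sum>i<d. (y (N - 1) i - T (y (N - 1)) i)^2)
      \<le> 4 * (\<Sum>i<d. (y 0 i - ystar i)^2) / (real (N - 1 + 1))^2"
  proof (rule iter_coeff_scheme_bound[where t = "weights N w" and n = "N - 1" and y = y,
        OF weights_0 weights_last _ T y0 ystar])
    show "0 \<le> weights N w k \<and> weights N w k \<le> 1/10" for k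
      using weights_bounds[OF w, of k] by simp
    fix k i assume "k < N - 1"
    then show "y (Suc k) i = y k i - (\<Sum>j\<le>k. (iter_coeff (weights N w) (Suc k) j
        - iter_coeff (weights N w) k j) * (y j i - T (y j) i))"
      using rec by (auto simp: step_matrix_def)
  qed
  with N show ?thesis
    by (simp add: enorm_def edist_def sum_nonneg)
qed

theorem theorem4p1:
  fixes N :: nat
  assumes "N \<ge> 2"
  shows "\<exists>C \<Phi>. C \<noteq> {} \<and> open_R (N - 2) C \<and> convex_R C \<and>
     continuous_R (N - 2) (N - 1) C \<Phi> \<and> inj_on \<Phi> C \<and> \<Phi> ` C \<subseteq> rmat (N - 1) \<and>
     (\<forall>w\<in>C. lower_triangular (N - 1) (\<Phi> w) \<and>
        (\<forall>d::nat. \<forall>T y ystar. d \<ge> 1 \<longrightarrow> nonexpansive_R d T \<longrightarrow>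
           y 0 \<in> rvec d \<longrightarrow> ystar \<in> rvec d \<longrightarrow> T ystar = ystar \<longrightarrow>
           (\<forall>k\<le>N - 2. \<forall>i. y (Suc k) i =
               y k i - (\<Sum>j\<le>k. \<Phi> w (k + 1) (j + 1) * (y j i - T (y j) i))) \<longrightarrow>
           (enorm d (\<lambda>i. y (N - 1) i - T (y (N - 1)) i))^2
             \<le> 4 * (edist d (y 0) ystar)^2 / (real N)^2))"
proof (intro exI[of _ "param_set N"] exI[of _ "step_matrix N"] conjI ballI allI impI)
  show "param_set N \<noteq> {}" "open_R (N - 2) (param_set N)" "convex_R (param_set N)"
    "continuous_R (N - 2) (N - 1) (param_set N) (step_matrix N)"
    "inj_on (step_matrix N) (param_set N)"
    by (fact param_set_nonempty open_R_param_set convex_R_param_set continuous_R_step_matrix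
        inj_on_step_matrix)+
  show "step_matrix N ` param_set N \<subseteq> rmat (N - 1)"
    unfolding rmat_def step_matrix_def by auto
next
  fix w show "lower_triangular (N - 1) (step_matrix N w)"
    unfolding lower_triangular_def step_matrix_def by auto
qed (use step_matrix_scheme_bound[OF assms] in blast)

end
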